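(* Let $H$ be a simple graph with $\chi'(H)\geq t$. Then $H$ contains $t$ connected subgraphs, each with at least one edge, that are pairwise edge-disjoint and such that any two of them have at least one vertex in common.
   Context: $\chi'(H)$ denotes the chromatic index of $H$ (minimum number of colours in a proper edge-colouring). *)

theory Defs
  imports Main
begin

definition simple_graph :: "'a set \<Rightarrow> 'a set set \<Rightarrow> bool" where
  "simple_graph V E \<longleftrightarrow> finite V \<and> (\<forall>e\<in>E. e \<subseteq> V \<and> card e = 2)"

definition proper_edge_colouring :: "'a set set \<Rightarrow> nat \<Rightarrow> ('a set \<Rightarrow> nat) \<Rightarrow> bool" where
  "proper_edge_colouring E k c \<longleftrightarrow>
     (\<forall>e\<in>E. c e < k) \<and>
     (\<forall>e\<in>E. \<forall>f\<in>E. e \<noteq> f \<and> e \<inter> f \<noteq> {} \<longrightarrow> c e \<noteq> c f)"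

definition chromatic_index :: "'a set set \<Rightarrow> nat" where
  "chromatic_index E = (LEAST k. \<exists>c. proper_edge_colouring E k c)"

text \<open>A subgraph without isolated vertices, given by its edge set F, with vertex set \<Union>F,
  is connected if any two of its vertices are joined by a walk using edges of F.\<close>
definition connected_edge_set :: "'a set set \<Rightarrow> bool" where
  "connected_edge_set F \<longleftrightarrow>
     (\<forall>u\<in>\<Union>F. \<forall>v\<in>\<Union>F. (\<lambda>x y. {x, y} \<in> F)\<^sup>*\<^sup>* u v)"

end

theory Submission
  imports Defs "HOL-Combinatorics.Transposition"
begin

text \<open>Let \<open>t = k + 1\<close> and pass to an edge-critical subgraph \<open>F\<close>: not \<open>k\<close>-edge-colourable, but
  every proper subgraph is. If some vertex has degree at least \<open>t\<close>, then \<open>t\<close> of its edges,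
  taken as one-edge subgraphs, do the job. Otherwise the maximum degree is at most \<open>k\<close>, and
  Vizing's fan and Kempe chain recolouring shows that some vertex \<open>u\<close> has degree exactly \<open>k\<close>
  (else \<open>F\<close> minus an edge would extend to a \<open>k\<close>-colouring of \<open>F\<close>). Criticality forbids cut
  vertices of degree at most \<open>k\<close>: \<open>k\<close>-colourings of two parts sharing only \<open>u\<close> can be glued after
  permuting colours. Hence \<open>F - u\<close> is connected and meets every edge at \<open>u\<close> in its other end,
  so the \<open>k\<close> edges at \<open>u\<close> together with \<open>F - u\<close> are the \<open>t\<close> subgraphs.\<close>

section \<open>Components of graphs of maximum degree two\<close>

definition at_most_one_neighbour :: "('a \<Rightarrow> 'a \<Rightarrow> bool) \<Rightarrow> 'a \<Rightarrow> bool" where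
  "at_most_one_neighbour R x \<longleftrightarrow> (\<forall>y z. R x y \<longrightarrow> R x z \<longrightarrow> y = z)"

definition at_most_two_neighbours :: "('a \<Rightarrow> 'a \<Rightarrow> bool) \<Rightarrow> 'a \<Rightarrow> bool" where
  "at_most_two_neighbours R x \<longleftrightarrow>
     (\<forall>y z w. R x y \<longrightarrow> R x z \<longrightarrow> R x w \<longrightarrow> y = z \<or> y = w \<or> z = w)"

lemma rtranclp_from_isolated:
  assumes "R\<^sup>*\<^sup>* a b" "\<And>z. \<not> R a z"
  shows "b = a"
  using assms by (cases rule: converse_rtranclpE) auto

lemma rtranclp_from_end_vertex:
  assumes "R\<^sup>*\<^sup>* u z" "at_most_one_neighbour R u" "R u y" "irreflp R"
  shows "z = u \<or> (\<lambda>p q. R p q \<and> p \<noteq> u \<and> q \<noteq> u)\<^sup>*\<^sup>* y z"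
  using assms(1)
proof (induction rule: rtranclp_induct)
  case base
  then show ?case by simp
next
  case (step z w)
  let ?R' = "\<lambda>p q. R p q \<and> p \<noteq> u \<and> q \<noteq> u"
  have "y \<noteq> u" using assms(3,4) by (auto dest: irreflpD)
  from step.IH show ?case
  proof
    assume "z = u"
    then show ?thesis using step.hyps(2) assms(2,3) unfolding at_most_one_neighbour_def by blast
  next
    assume yz: "?R'\<^sup>*\<^sup>* y z"
    have "z \<noteq> u" using yz \<open>y \<noteq> u\<close> by (cases rule: rtranclp.cases) auto
    with step.hyps(2) yz show ?thesis by (auto intro: rtranclp.rtrancl_into_rtrancl)
  qed
qed

text \<open>Components of a graph of maximum degree two are paths and cycles.\<close>
lemma no_three_ends_in_component:
  assumes "finite {x. \<exists>y. R x y}" "symp R" "irreflp R" "\<forall>x. at_most_two_neighbours R x"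
    and "at_most_one_neighbour R u" "at_most_one_neighbour R a" "at_most_one_neighbour R b"
    and "distinct [u, a, b]" "R\<^sup>*\<^sup>* u a" "R\<^sup>*\<^sup>* u b"
  shows False
  using assms
proof (induction "card {x. \<exists>y. R x y}" arbitrary: R u a b rule: less_induct)
  case less
  show False
  proof (cases "\<exists>y. R u y")
    case False
    then show False using rtranclp_from_isolated[OF \<open>R\<^sup>*\<^sup>* u a\<close>] \<open>distinct [u, a, b]\<close> by auto
  next
    case True
    then obtain y where uy: "R u y" by blast
    define R' where "R' = (\<lambda>p q. R p q \<and> p \<noteq> u \<and> q \<noteq> u)"
    have "R'\<^sup>*\<^sup>* y a" "R'\<^sup>*\<^sup>* y b"
      using rtranclp_from_end_vertex[OF _ \<open>at_most_one_neighbour R u\<close> uy \<open>irreflp R\<close>]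
        less.prems(9,10) \<open>distinct [u, a, b]\<close> unfolding R'_def by auto
    have yu: "R y u" using uy \<open>symp R\<close> by (simp add: sympD)
    have end_isolated: "\<not> R' y z" if "at_most_one_neighbour R y" for z
      using that yu unfolding R'_def at_most_one_neighbour_def by blast
    show False
    proof (cases "y = a \<or> y = b")
      case True
      then show False
        using end_isolated rtranclp_from_isolated \<open>R'\<^sup>*\<^sup>* y a\<close> \<open>R'\<^sup>*\<^sup>* y b\<close>
          less.prems(6,7) \<open>distinct [u, a, b]\<close> by (metis distinct_length_2_or_more)
    next
      case False
      have "{x. \<exists>z. R' x z} \<subset> {x. \<exists>z. R x z}" using uy unfolding R'_def by blast
      then have smaller: "card {x. \<exists>z. R' x z} < card {x. \<exists>z. R x z}"
        using \<open>finite {x. \<exists>y. R x y}\<close> by (rule psubset_card_mono[rotated])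
      show False
      proof (rule less.hyps[OF smaller _ _ _ _ _ _ _ _ \<open>R'\<^sup>*\<^sup>* y a\<close> \<open>R'\<^sup>*\<^sup>* y b\<close>])
        show "finite {x. \<exists>z. R' x z}" using less.prems(1) unfolding R'_def
          by (rule rev_finite_subset) blast
        show "symp R'" "irreflp R'" "\<forall>x. at_most_two_neighbours R' x"
          "at_most_one_neighbour R' a" "at_most_one_neighbour R' b"
          using less.prems(2-7) unfolding R'_def symp_def irreflp_def
            at_most_two_neighbours_def at_most_one_neighbour_def by blast+
        show "at_most_one_neighbour R' y"
          using less.prems(4) uy yu unfolding R'_def at_most_two_neighbours_def
            at_most_one_neighbour_def by metis
        show "distinct [y, a, b]" using False \<open>distinct [u, a, b]\<close> by auto
      qed
    qed
  qed
qed

section \<open>Edge colourings\<close>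

abbreviation edges_at :: "'a set set \<Rightarrow> 'a \<Rightarrow> 'a set set" where
  "edges_at F x \<equiv> {f \<in> F. x \<in> f}"

definition colourable :: "'a set set \<Rightarrow> nat \<Rightarrow> bool" where
  "colourable F k \<longleftrightarrow> (\<exists>c. proper_edge_colouring F k c)"

definition colour_missing :: "'a set set \<Rightarrow> ('a set \<Rightarrow> nat) \<Rightarrow> 'a \<Rightarrow> nat \<Rightarrow> bool" where
  "colour_missing G c x \<gamma> \<longleftrightarrow> (\<forall>f\<in>G. x \<in> f \<longrightarrow> c f \<noteq> \<gamma>)"

lemma card_2_doubleton: "card f = 2 \<Longrightarrow> p \<in> f \<Longrightarrow> q \<in> f \<Longrightarrow> p \<noteq> q \<Longrightarrow> f = {p, q}"
  by (auto simp: card_2_iff)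

lemma card_2_obtain_other:
  assumes "card f = 2" "x \<in> f"
  obtains y where "y \<noteq> x" "f = {x, y}"
proof -
  obtain a b where "f = {a, b}" "a \<noteq> b" using assms(1) by (auto simp: card_2_iff)
  with assms(2) that show thesis by (metis insert_commute insert_iff singletonD)
qed

lemma proper_edge_colouringD:
  assumes "proper_edge_colouring G k c" "e \<in> G" "f \<in> G" "e \<noteq> f" "x \<in> e" "x \<in> f"
  shows "c e \<noteq> c f"
  using assms unfolding proper_edge_colouring_def by blast

lemma proper_edge_colouring_less:
  "proper_edge_colouring G k c \<Longrightarrow> e \<in> G \<Longrightarrow> c e < k"
  unfolding proper_edge_colouring_def by blast

lemma colour_missing_if_degree_less:
  assumes "finite G" "card (edges_at G x) < k"
  obtains \<gamma> where "\<gamma> < k" "colour_missing G c x \<gamma>"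
proof -
  have "card (c ` edges_at G x) < k"
    using assms card_image_le[of "edges_at G x" c] by simp
  then have "\<not> {..<k} \<subseteq> c ` edges_at G x"
    using card_mono[of "c ` edges_at G x" "{..<k}"] assms(1) by auto
  then show ?thesis using that unfolding colour_missing_def by blast
qed

lemma proper_edge_colouring_comp:
  assumes "proper_edge_colouring F k c" "bij_betw p {..<k} {..<k}"
  shows "proper_edge_colouring F k (p \<circ> c)"
proof -
  have "p (c e) < k" if "e \<in> F" for e
    using assms bij_betwE proper_edge_colouring_less that by fastforce
  moreover have "p (c e) \<noteq> p (c f)" if "e \<in> F" "f \<in> F" "e \<noteq> f" "e \<inter> f \<noteq> {}" for e f
    using assms that inj_onD[of p "{..<k}" "c e" "c f"]
    unfolding proper_edge_colouring_def bij_betw_def by auto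
  ultimately show ?thesis unfolding proper_edge_colouring_def by simp
qed

lemma proper_edge_colouring_Un:
  assumes "proper_edge_colouring F\<^sub>1 k c\<^sub>1" "proper_edge_colouring F\<^sub>2 k c\<^sub>2"
    and "\<forall>e\<in>F\<^sub>1. \<forall>f\<in>F\<^sub>2. e \<inter> f \<noteq> {} \<longrightarrow> c\<^sub>1 e \<noteq> c\<^sub>2 f"
  shows "proper_edge_colouring (F\<^sub>1 \<union> F\<^sub>2) k (\<lambda>e. if e \<in> F\<^sub>1 then c\<^sub>1 e else c\<^sub>2 e)"
proof -
  let ?c = "\<lambda>e. if e \<in> F\<^sub>1 then c\<^sub>1 e else c\<^sub>2 e"
  have "?c e \<noteq> ?c f" if "e \<in> F\<^sub>1 \<union> F\<^sub>2" "f \<in> F\<^sub>1 \<union> F\<^sub>2" "e \<noteq> f" "e \<inter> f \<noteq> {}" for e f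
  proof (cases "e \<in> F\<^sub>1"; cases "f \<in> F\<^sub>1")
    assume "e \<notin> F\<^sub>1" "f \<in> F\<^sub>1"
    moreover have "f \<inter> e \<noteq> {}" "e \<in> F\<^sub>2" using that(1,4) \<open>e \<notin> F\<^sub>1\<close> by auto
    ultimately have "c\<^sub>1 f \<noteq> c\<^sub>2 e" using assms(3) by blast
    then show ?thesis using \<open>e \<notin> F\<^sub>1\<close> \<open>f \<in> F\<^sub>1\<close> by simp
  qed (use assms that in \<open>auto simp: proper_edge_colouring_def\<close>)
  moreover have "?c e < k" if "e \<in> F\<^sub>1 \<union> F\<^sub>2" for e
    using assms(1,2) that proper_edge_colouring_less by fastforce
  ultimately show ?thesis unfolding proper_edge_colouring_def by blast
qed

lemma ex_bij_betw_image_eq: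
  assumes "finite X" "A \<subseteq> X" "B \<subseteq> X" "card A = card B"
  obtains p where "bij_betw p X X" "p ` A = B"
proof -
  have fin: "finite A" "finite B" using assms(1-3) finite_subset by auto
  obtain f where f: "bij_betw f A B" using finite_same_card_bij[OF fin assms(4)] by blast
  have "card (X - A) = card (X - B)" using assms fin by (simp add: card_Diff_subset)
  then obtain g where g: "bij_betw g (X - A) (X - B)"
    using finite_same_card_bij assms(1) by (metis finite_Diff)
  let ?p = "\<lambda>x. if x \<in> A then f x else g x"
  have "bij_betw ?p A B" using f by (rule bij_betw_cong[THEN iffD1, rotated]) simp
  moreover have "bij_betw ?p (X - A) (X - B)" using g by (rule bij_betw_cong[THEN iffD1, rotated]) simp
  ultimately have "bij_betw ?p (A \<union> (X - A)) (B \<union> (X - B))" by (rule bij_betw_combine) blast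
  moreover have "?p ` A = B" using f by (auto simp: bij_betw_def)
  ultimately show thesis using that assms(2,3) by (simp add: Un_absorb1 Un_Diff_cancel)
qed

text \<open>Colourings of two edge sets meeting only in \<open>u\<close> glue together once the colours of the
  second one are permuted so that the colours at \<open>u\<close> on the two sides become disjoint.\<close>
lemma colourable_Un_at_cut_vertex:
  assumes fin: "finite F\<^sub>1" "finite F\<^sub>2" and col: "colourable F\<^sub>1 k" "colourable F\<^sub>2 k"
    and disj: "F\<^sub>1 \<inter> F\<^sub>2 = {}" and cut: "\<Union>F\<^sub>1 \<inter> \<Union>F\<^sub>2 \<subseteq> {u}"
    and deg: "card (edges_at (F\<^sub>1 \<union> F\<^sub>2) u) \<le> k"
  shows "colourable (F\<^sub>1 \<union> F\<^sub>2) k"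
proof -
  obtain c\<^sub>1 c\<^sub>2 where c: "proper_edge_colouring F\<^sub>1 k c\<^sub>1" "proper_edge_colouring F\<^sub>2 k c\<^sub>2"
    using col unfolding colourable_def by blast
  define A\<^sub>1 where "A\<^sub>1 = c\<^sub>1 ` edges_at F\<^sub>1 u"
  define A\<^sub>2 where "A\<^sub>2 = c\<^sub>2 ` edges_at F\<^sub>2 u"
  have A_sub: "A\<^sub>1 \<subseteq> {..<k}" "A\<^sub>2 \<subseteq> {..<k}"
    using c unfolding A\<^sub>1_def A\<^sub>2_def proper_edge_colouring_def by auto
  have "card A\<^sub>1 + card A\<^sub>2 \<le> card (edges_at F\<^sub>1 u) + card (edges_at F\<^sub>2 u)"
    unfolding A\<^sub>1_def A\<^sub>2_def using fin by (intro add_mono card_image_le) auto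
  also have "\<dots> = card (edges_at F\<^sub>1 u \<union> edges_at F\<^sub>2 u)"
    using fin disj by (intro card_Un_disjoint[symmetric]) auto
  also have "edges_at F\<^sub>1 u \<union> edges_at F\<^sub>2 u = edges_at (F\<^sub>1 \<union> F\<^sub>2) u" by blast
  finally have "card A\<^sub>1 + card A\<^sub>2 \<le> k" using deg by linarith
  moreover have "finite A\<^sub>1" using A_sub(1) finite_subset by blast
  ultimately have "card A\<^sub>2 \<le> card ({..<k} - A\<^sub>1)" using A_sub by (simp add: card_Diff_subset)
  then obtain B where B: "B \<subseteq> {..<k} - A\<^sub>1" "card B = card A\<^sub>2"
    by (rule obtain_subset_with_card_n)
  then obtain p where p: "bij_betw p {..<k} {..<k}" "p ` A\<^sub>2 = B"
    using ex_bij_betw_image_eq[of "{..<k}" A\<^sub>2 B] A_sub(2) B(1) B(2)[symmetric] by blast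
  have "c\<^sub>1 e \<noteq> (p \<circ> c\<^sub>2) f" if "e \<in> F\<^sub>1" "f \<in> F\<^sub>2" "e \<inter> f \<noteq> {}" for e f
  proof -
    have "u \<in> e" "u \<in> f" using cut that by auto
    then have "c\<^sub>1 e \<in> A\<^sub>1" "(p \<circ> c\<^sub>2) f \<in> B"
      using that p(2) unfolding A\<^sub>1_def A\<^sub>2_def by auto
    then show ?thesis using B(1) by auto
  qed
  then show ?thesis
    using proper_edge_colouring_Un[OF c(1) proper_edge_colouring_comp[OF c(2) p(1)]]
    unfolding colourable_def by blast
qed

section \<open>Kempe chains\<close>

definition kempe_rel :: "'a set set \<Rightarrow> ('a set \<Rightarrow> nat) \<Rightarrow> nat \<Rightarrow> nat \<Rightarrow> 'a \<Rightarrow> 'a \<Rightarrow> bool" where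
  "kempe_rel G c \<alpha> \<beta> x y \<longleftrightarrow> {x, y} \<in> G \<and> (c {x, y} = \<alpha> \<or> c {x, y} = \<beta>)"

definition kempe_chain :: "'a set set \<Rightarrow> ('a set \<Rightarrow> nat) \<Rightarrow> nat \<Rightarrow> nat \<Rightarrow> 'a \<Rightarrow> 'a set" where
  "kempe_chain G c \<alpha> \<beta> x\<^sub>0 = {z. (kempe_rel G c \<alpha> \<beta>)\<^sup>*\<^sup>* x\<^sub>0 z}"

definition kempe_swap ::
    "'a set set \<Rightarrow> ('a set \<Rightarrow> nat) \<Rightarrow> nat \<Rightarrow> nat \<Rightarrow> 'a \<Rightarrow> 'a set \<Rightarrow> nat" where
  "kempe_swap G c \<alpha> \<beta> x\<^sub>0 f =
     (if f \<inter> kempe_chain G c \<alpha> \<beta> x\<^sub>0 \<noteq> {} \<and> (c f = \<alpha> \<or> c f = \<beta>)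
      then transpose \<alpha> \<beta> (c f) else c f)"

lemma symp_kempe_rel: "symp (kempe_rel G c \<alpha> \<beta>)"
  unfolding kempe_rel_def by (rule sympI) (simp add: insert_commute)

lemma irreflp_kempe_rel: "\<forall>f\<in>G. card f = 2 \<Longrightarrow> irreflp (kempe_rel G c \<alpha> \<beta>)"
  unfolding kempe_rel_def irreflp_def by fastforce

lemma kempe_chain_sym: "y \<in> kempe_chain G c \<alpha> \<beta> x \<Longrightarrow> x \<in> kempe_chain G c \<alpha> \<beta> y"
  unfolding kempe_chain_def mem_Collect_eq by (rule sympD[OF symp_rtranclp[OF symp_kempe_rel]])

lemma kempe_chain_trans:
  "y \<in> kempe_chain G c \<alpha> \<beta> x \<Longrightarrow> z \<in> kempe_chain G c \<alpha> \<beta> y \<Longrightarrow> z \<in> kempe_chain G c \<alpha> \<beta> x"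
  unfolding kempe_chain_def by (simp add: rtranclp_trans)

lemma at_most_two_neighbours_kempe_rel:
  assumes "proper_edge_colouring G k c"
  shows "at_most_two_neighbours (kempe_rel G c \<alpha> \<beta>) x"
  unfolding at_most_two_neighbours_def
proof (intro allI impI)
  fix y z w assume rel: "kempe_rel G c \<alpha> \<beta> x y" "kempe_rel G c \<alpha> \<beta> x z" "kempe_rel G c \<alpha> \<beta> x w"
  show "y = z \<or> y = w \<or> z = w"
  proof (rule ccontr)
    assume "\<not> ?thesis"
    then have "{x, y} \<noteq> {x, z}" "{x, y} \<noteq> {x, w}" "{x, z} \<noteq> {x, w}"
      by (metis doubleton_eq_iff)+
    then have "c {x, y} \<noteq> c {x, z}" "c {x, y} \<noteq> c {x, w}" "c {x, z} \<noteq> c {x, w}"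
      using proper_edge_colouringD[OF assms] rel unfolding kempe_rel_def by (meson insertI1)+
    then show False using rel unfolding kempe_rel_def by auto
  qed
qed

lemma at_most_one_neighbour_kempe_rel:
  assumes "proper_edge_colouring G k c" "colour_missing G c x \<alpha> \<or> colour_missing G c x \<beta>"
  shows "at_most_one_neighbour (kempe_rel G c \<alpha> \<beta>) x"
  unfolding at_most_one_neighbour_def
proof (intro allI impI)
  fix y z assume rel: "kempe_rel G c \<alpha> \<beta> x y" "kempe_rel G c \<alpha> \<beta> x z"
  show "y = z"
  proof (rule ccontr)
    assume "y \<noteq> z"
    then have "{x, y} \<noteq> {x, z}" by (metis doubleton_eq_iff)
    then have "c {x, y} \<noteq> c {x, z}"
      using proper_edge_colouringD[OF assms(1)] rel unfolding kempe_rel_def by (meson insertI1)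
    then show False using rel assms(2) unfolding kempe_rel_def colour_missing_def by auto
  qed
qed

lemma kempe_chain_ends:
  assumes "finite G" "\<forall>f\<in>G. card f = 2" "proper_edge_colouring G k c" "distinct [u, a, b]"
    and "\<forall>x\<in>{u, a, b}. colour_missing G c x \<alpha> \<or> colour_missing G c x \<beta>"
  shows "a \<notin> kempe_chain G c \<alpha> \<beta> u \<or> b \<notin> kempe_chain G c \<alpha> \<beta> u"
proof -
  have "{x. \<exists>y. kempe_rel G c \<alpha> \<beta> x y} \<subseteq> \<Union>G" unfolding kempe_rel_def by blast
  moreover have "finite (\<Union>G)" using assms(1,2) by (intro finite_Union) (auto intro: card_ge_0_finite)
  ultimately have "finite {x. \<exists>y. kempe_rel G c \<alpha> \<beta> x y}" by (rule finite_subset)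
  then show ?thesis
    using no_three_ends_in_component[OF _ symp_kempe_rel irreflp_kempe_rel[OF assms(2)]]
      at_most_two_neighbours_kempe_rel[OF assms(3)] at_most_one_neighbour_kempe_rel[OF assms(3)]
      assms(4,5) unfolding kempe_chain_def by blast
qed

lemma kempe_chain_closed:
  assumes "\<forall>f\<in>G. card f = 2" "f \<in> G" "c f = \<alpha> \<or> c f = \<beta>" "f \<inter> kempe_chain G c \<alpha> \<beta> x\<^sub>0 \<noteq> {}"
  shows "f \<subseteq> kempe_chain G c \<alpha> \<beta> x\<^sub>0"
proof -
  obtain a where a: "a \<in> f" "a \<in> kempe_chain G c \<alpha> \<beta> x\<^sub>0" using assms(4) by blast
  obtain b where "b \<noteq> a" "f = {a, b}" using card_2_obtain_other assms(1,2) a(1) by metis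
  then have "kempe_rel G c \<alpha> \<beta> a b" using assms(2,3) unfolding kempe_rel_def by simp
  then have "b \<in> kempe_chain G c \<alpha> \<beta> x\<^sub>0"
    using a(2) unfolding kempe_chain_def by (simp add: rtranclp.rtrancl_into_rtrancl)
  then show ?thesis using a \<open>f = {a, b}\<close> by blast
qed

text \<open>Two adjacent edges coloured \<open>\<alpha>\<close> or \<open>\<beta>\<close> lie in the same chain, so they are swapped
  together; hence the swap creates no conflict.\<close>
lemma kempe_swap_proper:
  assumes "\<forall>f\<in>G. card f = 2" "proper_edge_colouring G k c" "\<alpha> < k" "\<beta> < k"
  shows "proper_edge_colouring G k (kempe_swap G c \<alpha> \<beta> x\<^sub>0)"
proof -
  let ?C = "kempe_chain G c \<alpha> \<beta> x\<^sub>0"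
  let ?swapped = "\<lambda>f. f \<inter> ?C \<noteq> {} \<and> (c f = \<alpha> \<or> c f = \<beta>)"
  have same: "?swapped e \<longleftrightarrow> ?swapped f"
    if "e \<in> G" "f \<in> G" "e \<inter> f \<noteq> {}" "c e = \<alpha> \<or> c e = \<beta>" "c f = \<alpha> \<or> c f = \<beta>" for e f
    using kempe_chain_closed[OF assms(1)] that by blast
  have "kempe_swap G c \<alpha> \<beta> x\<^sub>0 e \<noteq> kempe_swap G c \<alpha> \<beta> x\<^sub>0 f"
    if "e \<in> G" "f \<in> G" "e \<noteq> f" "e \<inter> f \<noteq> {}" for e f
  proof -
    have "c e \<noteq> c f" using assms(2) that unfolding proper_edge_colouring_def by blast
    then show ?thesis using same[OF that(1,2,4)] unfolding kempe_swap_def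
      by (auto simp: transpose_eq_iff)
  qed
  moreover have "kempe_swap G c \<alpha> \<beta> x\<^sub>0 e < k" if "e \<in> G" for e
    using proper_edge_colouring_less[OF assms(2) that] assms(3,4)
    unfolding kempe_swap_def transpose_def by auto
  ultimately show ?thesis unfolding proper_edge_colouring_def by blast
qed

lemma kempe_swap_outside:
  assumes "\<forall>f\<in>G. card f = 2" "x \<notin> kempe_chain G c \<alpha> \<beta> x\<^sub>0" "f \<in> G" "x \<in> f"
  shows "kempe_swap G c \<alpha> \<beta> x\<^sub>0 f = c f"
  using kempe_chain_closed[OF assms(1,3), of c \<alpha> \<beta> x\<^sub>0] assms(2,4) unfolding kempe_swap_def by auto

lemma kempe_swap_eq_other_colour:
  "\<gamma> \<noteq> \<alpha> \<Longrightarrow> \<gamma> \<noteq> \<beta> \<Longrightarrow> kempe_swap G c \<alpha> \<beta> x\<^sub>0 f = \<gamma> \<longleftrightarrow> c f = \<gamma>"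
  unfolding kempe_swap_def by (auto simp: transpose_eq_iff)

lemma colour_missing_kempe_swap_other:
  "\<gamma> \<noteq> \<alpha> \<Longrightarrow> \<gamma> \<noteq> \<beta> \<Longrightarrow>
    colour_missing G (kempe_swap G c \<alpha> \<beta> x\<^sub>0) x \<gamma> \<longleftrightarrow> colour_missing G c x \<gamma>"
  unfolding colour_missing_def by (simp add: kempe_swap_eq_other_colour)

lemma colour_missing_kempe_swap_outside:
  assumes "\<forall>f\<in>G. card f = 2" "x \<notin> kempe_chain G c \<alpha> \<beta> x\<^sub>0"
  shows "colour_missing G (kempe_swap G c \<alpha> \<beta> x\<^sub>0) x \<gamma> \<longleftrightarrow> colour_missing G c x \<gamma>"
  using kempe_swap_outside[OF assms] unfolding colour_missing_def by auto

lemma colour_missing_kempe_swap_start: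
  "colour_missing G c x\<^sub>0 \<beta> \<Longrightarrow> colour_missing G (kempe_swap G c \<alpha> \<beta> x\<^sub>0) x\<^sub>0 \<alpha>"
  unfolding colour_missing_def kempe_swap_def kempe_chain_def by (auto simp: transpose_eq_iff)

section \<open>Vizing fans\<close>

text \<open>A Vizing fan at \<open>u\<close>; the colouring \<open>c\<close> is one of \<open>F - {{u, v 0}}\<close>, so the fan edge
  \<open>{u, v 0}\<close> is the uncoloured one.\<close>
definition fan :: "'a set set \<Rightarrow> 'a \<Rightarrow> ('a set \<Rightarrow> nat) \<Rightarrow> (nat \<Rightarrow> 'a) \<Rightarrow> nat \<Rightarrow> bool" where
  "fan F u c v m \<longleftrightarrow> inj_on v {0..m} \<and> (\<forall>i\<le>m. {u, v i} \<in> F \<and> v i \<noteq> u) \<and>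
     (\<forall>i\<in>{1..m}. colour_missing (F - {{u, v 0}}) c (v (i - 1)) (c {u, v i}))"

lemma fan_vertex_eq_iff:
  "fan F u c v m \<Longrightarrow> i \<le> m \<Longrightarrow> l \<le> m \<Longrightarrow> v i = v l \<longleftrightarrow> i = l"
  unfolding fan_def inj_on_def by auto

lemma fan_vertex_ne_centre: "fan F u c v m \<Longrightarrow> i \<le> m \<Longrightarrow> v i \<noteq> u"
  unfolding fan_def by blast

lemma fan_edge_eq_iff:
  assumes "fan F u c v m" "i \<le> m" "l \<le> m"
  shows "{u, v i} = {u, v l} \<longleftrightarrow> i = l"
proof -
  have "v i \<noteq> u" "v l \<noteq> u" using fan_vertex_ne_centre[OF assms(1)] assms(2,3) by auto
  then have "{u, v i} = {u, v l} \<longleftrightarrow> v i = v l" by (metis doubleton_eq_iff)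
  then show ?thesis using fan_vertex_eq_iff[OF assms] by simp
qed

lemma fan_edge_in_diff:
  assumes "fan F u c v m" "1 \<le> i" "i \<le> m"
  shows "{u, v i} \<in> F - {{u, v 0}}"
  using assms fan_edge_eq_iff[OF assms(1), of i 0] unfolding fan_def by auto

lemma fan_colour_missing:
  assumes "fan F u c v m" "i < m"
  shows "colour_missing (F - {{u, v 0}}) c (v i) (c {u, v (Suc i)})"
proof -
  have "Suc i \<in> {1..m}" using assms(2) by simp
  then show ?thesis using assms(1) unfolding fan_def by (metis diff_Suc_1)
qed

lemma fan_colours_distinct:
  assumes "proper_edge_colouring (F - {{u, v 0}}) k c" "fan F u c v m"
    and "i \<in> {1..m}" "l \<in> {1..m}" "i \<noteq> l"
  shows "c {u, v i} \<noteq> c {u, v l}"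
  using proper_edge_colouringD[OF assms(1) fan_edge_in_diff[OF assms(2)] fan_edge_in_diff[OF assms(2)]]
    fan_edge_eq_iff[OF assms(2)] assms(3-5) by auto

lemma fan_prefix: "fan F u c v m \<Longrightarrow> l \<le> m \<Longrightarrow> fan F u c v l"
  unfolding fan_def by (auto intro: inj_on_subset)

lemma fan_snoc:
  assumes "fan F u c v m" "{u, w} \<in> F - {{u, v 0}}" "w \<noteq> u" "w \<notin> v ` {0..m}"
    and "colour_missing (F - {{u, v 0}}) c (v m) (c {u, w})"
  shows "fan F u c (v(Suc m := w)) (Suc m)"
proof -
  let ?v = "v(Suc m := w)"
  have agree: "?v i = v i" if "i \<le> m" for i using that by simp
  have "inj_on ?v {0..m} \<longleftrightarrow> inj_on v {0..m}" by (rule inj_on_cong) simp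
  then have "inj_on ?v {0..m}" using assms(1) unfolding fan_def by blast
  moreover have "?v (Suc m) \<notin> ?v ` {0..m}" using assms(4) agree by auto
  ultimately have "inj_on ?v {0..Suc m}" by (simp add: atLeast0_atMost_Suc)
  moreover have "{u, ?v i} \<in> F \<and> ?v i \<noteq> u" if "i \<le> Suc m" for i
    using assms(1-3) that unfolding fan_def by (cases "i = Suc m") auto
  moreover have "colour_missing (F - {{u, ?v 0}}) c (?v (i - 1)) (c {u, ?v i})"
    if "i \<in> {1..Suc m}" for i
    using assms(1,5) that unfolding fan_def by (cases "i = Suc m") auto
  ultimately show ?thesis unfolding fan_def by blast
qed

lemma fan_length_less:
  assumes "finite F" "\<forall>f\<in>F. card f = 2" "fan F u c v m"
  shows "m < card (\<Union>F)"
proof -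
  have "finite (\<Union>F)" using assms(1,2) by (intro finite_Union) (auto intro: card_ge_0_finite)
  moreover have "v ` {0..m} \<subseteq> \<Union>F"
  proof
    fix y assume "y \<in> v ` {0..m}"
    then obtain i where "i \<le> m" "y = v i" by auto
    then show "y \<in> \<Union>F" using assms(3) unfolding fan_def by blast
  qed
  ultimately have "card (v ` {0..m}) \<le> card (\<Union>F)" by (rule card_mono)
  moreover have "card (v ` {0..m}) = Suc m" using assms(3) unfolding fan_def by (simp add: card_image)
  ultimately show ?thesis by simp
qed

lemma maximal_fan_exists:
  assumes "finite F" "\<forall>f\<in>F. card f = 2" "{u, v\<^sub>0} \<in> F"
  obtains v m where "v 0 = v\<^sub>0" "fan F u c v m"
    "\<And>w. {u, w} \<in> F - {{u, v\<^sub>0}} \<Longrightarrow> colour_missing (F - {{u, v\<^sub>0}}) c (v m) (c {u, w})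
      \<Longrightarrow> w \<in> v ` {0..m}"
proof -
  let ?L = "{m. \<exists>v. v 0 = v\<^sub>0 \<and> fan F u c v m}"
  have "card {u, v\<^sub>0} = 2" using assms(2,3) by blast
  then have "u \<noteq> v\<^sub>0" by (cases "u = v\<^sub>0") auto
  then have "fan F u c (\<lambda>_. v\<^sub>0) 0" using assms(3) unfolding fan_def by simp
  then have "0 \<in> ?L" by (intro CollectI exI[of _ "\<lambda>_. v\<^sub>0"]) simp
  moreover have "?L \<subseteq> {..<card (\<Union>F)}" using fan_length_less[OF assms(1,2)] by blast
  then have "finite ?L" by (rule finite_subset) simp
  ultimately have "Max ?L \<in> ?L" by (intro Max_in) auto
  then obtain v where v: "v 0 = v\<^sub>0" "fan F u c v (Max ?L)" by blast
  have "w \<in> v ` {0..Max ?L}"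
    if "{u, w} \<in> F - {{u, v\<^sub>0}}" "colour_missing (F - {{u, v\<^sub>0}}) c (v (Max ?L)) (c {u, w})" for w
  proof (rule ccontr)
    assume "w \<notin> v ` {0..Max ?L}"
    moreover have "w \<noteq> u"
    proof
      assume "w = u"
      moreover have "card {u, w} = 2" using that(1) assms(2) by blast
      ultimately show False by simp
    qed
    moreover note that
    ultimately have "fan F u c (v(Suc (Max ?L) := w)) (Suc (Max ?L))"
      using fan_snoc[OF v(2)] unfolding v(1) by blast
    moreover have "(v(Suc (Max ?L) := w)) 0 = v\<^sub>0" using v(1) by simp
    ultimately have "Suc (Max ?L) \<in> ?L" by blast
    then show False using Max_ge[OF \<open>finite ?L\<close>, of "Suc (Max ?L)"] by simp
  qed
  then show thesis using that v by blast
qed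

lemma fan_recolour_colourable:
  assumes c: "proper_edge_colouring (F - {{u, v 0}}) k c" and fan: "fan F u c v j"
    and \<sigma>_less: "\<forall>i\<le>j. \<sigma> i < k" and \<sigma>_inj: "inj_on \<sigma> {0..j}"
    and \<sigma>_at_u: "\<forall>i\<le>j. \<forall>f\<in>F - {{u, v 0}}. u \<in> f \<longrightarrow> (\<forall>l\<le>j. f \<noteq> {u, v l}) \<longrightarrow> \<sigma> i \<noteq> c f"
    and \<sigma>_at_v: "\<forall>i\<le>j. colour_missing (F - {{u, v 0}}) c (v i) (\<sigma> i)"
  shows "colourable F k"
proof -
  let ?fan_edge = "\<lambda>f. \<exists>i\<le>j. f = {u, v i}"
  define c' where "c' f = (if ?fan_edge f then \<sigma> (THE i. i \<le> j \<and> f = {u, v i}) else c f)" for f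
  have c'_fan: "c' {u, v i} = \<sigma> i" if "i \<le> j" for i
  proof -
    have "(THE l. l \<le> j \<and> {u, v i} = {u, v l}) = i"
      using that fan_edge_eq_iff[OF fan] by (intro the_equality) auto
    then show ?thesis using that unfolding c'_def by auto
  qed
  have c'_other: "c' f = c f" if "\<not> ?fan_edge f" for f
    unfolding c'_def using that by (rule if_not_P)
  have fan_vs_other: "c' {u, v i} \<noteq> c' f"
    if "i \<le> j" "f \<in> F" "f \<noteq> {u, v i}" "x \<in> f" "x \<in> {u, v i}" for i f x
  proof (cases "?fan_edge f")
    case True
    then obtain l where l: "l \<le> j" "f = {u, v l}" by blast
    then have "l \<noteq> i" using that(3) by blast
    then have "\<sigma> l \<noteq> \<sigma> i" using l(1) that(1) by (simp add: inj_on_eq_iff[OF \<sigma>_inj])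
    then show ?thesis using c'_fan l that(1) by simp
  next
    case False
    then have "f \<in> F - {{u, v 0}}" using that(2) by blast
    moreover have "x = u \<or> x = v i" using that(5) by blast
    ultimately show ?thesis
      using \<sigma>_at_u \<sigma>_at_v c'_fan c'_other False that unfolding colour_missing_def by metis
  qed
  have "c' e \<noteq> c' f" if "e \<in> F" "f \<in> F" "e \<noteq> f" "x \<in> e" "x \<in> f" for e f x
  proof (cases "?fan_edge e \<or> ?fan_edge f")
    case True
    then show ?thesis using fan_vs_other that by metis
  next
    case False
    then have "e \<in> F - {{u, v 0}}" "f \<in> F - {{u, v 0}}" using that(1,2) by auto
    then show ?thesis using proper_edge_colouringD[OF c] c'_other False that(3-5) by metis
  qed
  moreover have "c' f < k" if "f \<in> F" for f
    using proper_edge_colouring_less[OF c] \<sigma>_less c'_fan c'_other that by (cases "?fan_edge f") auto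
  ultimately show ?thesis unfolding colourable_def proper_edge_colouring_def by blast
qed

text \<open>Each fan edge takes the colour of the next one, and the last one takes \<open>\<gamma>\<close>.\<close>
lemma fan_shift_colourable:
  assumes c: "proper_edge_colouring (F - {{u, v 0}}) k c" and fan: "fan F u c v j" and "\<gamma> < k"
    and at_u: "colour_missing (F - {{u, v 0}}) c u \<gamma>"
    and at_v: "colour_missing (F - {{u, v 0}}) c (v j) \<gamma>"
  shows "colourable F k"
proof (rule fan_recolour_colourable[OF c fan])
  define \<sigma> where "\<sigma> i = (if i < j then c {u, v (Suc i)} else \<gamma>)" for i
  have next_edge: "{u, v (Suc i)} \<in> F - {{u, v 0}}" if "i < j" for i
    using fan_edge_in_diff[OF fan] that by simp
  show "\<forall>i\<le>j. \<sigma> i < k"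
    using proper_edge_colouring_less[OF c next_edge] \<open>\<gamma> < k\<close> unfolding \<sigma>_def by simp
  have "\<sigma> i \<noteq> \<sigma> l" if "i \<le> j" "l \<le> j" "i < l" for i l
  proof (cases "l < j")
    case True
    then show ?thesis
      using fan_colours_distinct[OF c fan, of "Suc i" "Suc l"] that unfolding \<sigma>_def by simp
  next
    case False
    then show ?thesis using at_u next_edge that unfolding \<sigma>_def colour_missing_def by auto
  qed
  then show "inj_on \<sigma> {0..j}" unfolding inj_on_def by (metis atLeastAtMost_iff linorder_cases)
  show "\<forall>i\<le>j. \<forall>f\<in>F - {{u, v 0}}. u \<in> f \<longrightarrow> (\<forall>l\<le>j. f \<noteq> {u, v l}) \<longrightarrow> \<sigma> i \<noteq> c f"
    using proper_edge_colouringD[OF c next_edge] at_u unfolding \<sigma>_def colour_missing_def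
    by (metis Suc_leI insertI1)
  show "\<forall>i\<le>j. colour_missing (F - {{u, v 0}}) c (v i) (\<sigma> i)"
    using fan_colour_missing[OF fan] at_v unfolding \<sigma>_def by auto
qed

text \<open>After the swap \<open>\<alpha>\<close> is missing at both \<open>u\<close> and \<open>v m\<close>, so the fan can be shifted.\<close>
lemma fan_kempe_swap_colourable:
  assumes "\<forall>f\<in>F. card f = 2" "proper_edge_colouring (F - {{u, v 0}}) k c" "fan F u c v m"
    and "\<alpha> < k" "\<beta> < k" "colour_missing (F - {{u, v 0}}) c u \<alpha>"
    and "colour_missing (F - {{u, v 0}}) c (v m) \<beta>"
    and "u \<notin> kempe_chain (F - {{u, v 0}}) c \<alpha> \<beta> (v m)"
    and "\<forall>i\<in>{1..m}. (c {u, v i} \<noteq> \<alpha> \<and> c {u, v i} \<noteq> \<beta>)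
           \<or> v (i - 1) \<notin> kempe_chain (F - {{u, v 0}}) c \<alpha> \<beta> (v m)"
  shows "colourable F k"
proof -
  let ?G = "F - {{u, v 0}}"
  define c' where "c' = kempe_swap ?G c \<alpha> \<beta> (v m)"
  have two: "\<forall>f\<in>?G. card f = 2" using assms(1) by blast
  have fan_colours: "c' {u, v i} = c {u, v i}" if "i \<in> {1..m}" for i
  proof -
    have "{u, v i} \<in> ?G" using fan_edge_in_diff[OF assms(3)] that by simp
    then show ?thesis unfolding c'_def by (rule kempe_swap_outside[OF two assms(8)]) simp
  qed
  have "colour_missing ?G c' (v (i - 1)) (c' {u, v i})" if i: "i \<in> {1..m}" for i
  proof -
    have "colour_missing ?G c (v (i - 1)) (c {u, v i})" using assms(3) i unfolding fan_def by blast
    then show ?thesis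
      using assms(9) i fan_colours[OF i] colour_missing_kempe_swap_other
        colour_missing_kempe_swap_outside[OF two] unfolding c'_def by metis
  qed
  then have "fan F u c' v m" using assms(3) unfolding fan_def by blast
  moreover have "proper_edge_colouring ?G k c'"
    unfolding c'_def using kempe_swap_proper[OF two assms(2,4,5)] .
  moreover have "colour_missing ?G c' u \<alpha>"
    unfolding c'_def using colour_missing_kempe_swap_outside[OF two assms(8)] assms(6) by blast
  moreover have "colour_missing ?G c' (v m) \<alpha>"
    unfolding c'_def using colour_missing_kempe_swap_start[OF assms(7)] .
  ultimately show ?thesis using fan_shift_colourable[of F u v k c' m \<alpha>] assms(4) by blast
qed

text \<open>By the fan condition \<open>\<beta>\<close> is missing at \<open>v (j - 1)\<close> as well. The \<open>\<alpha>\<close>/\<open>\<beta>\<close> chain from \<open>u\<close>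
  is a path ending at \<open>u\<close>, so it misses \<open>v (j - 1)\<close> or \<open>v m\<close>; swap the chain at that vertex.\<close>
lemma fan_kempe_colourable:
  assumes fin: "finite F" and two: "\<forall>f\<in>F. card f = 2"
    and c: "proper_edge_colouring (F - {{u, v 0}}) k c" and fan: "fan F u c v m"
    and "\<alpha> < k" "\<beta> < k" and \<alpha>: "colour_missing (F - {{u, v 0}}) c u \<alpha>"
    and \<beta>: "colour_missing (F - {{u, v 0}}) c (v m) \<beta>" and j: "j \<in> {1..m}" "c {u, v j} = \<beta>"
  shows "colourable F k"
proof -
  let ?G = "F - {{u, v 0}}"
  let ?chain = "kempe_chain ?G c \<alpha> \<beta>"
  have "j - 1 < m" "Suc (j - 1) = j" using j(1) by auto
  have prev: "colour_missing ?G c (v (j - 1)) \<beta>"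
    using fan_colour_missing[OF fan \<open>j - 1 < m\<close>] \<open>Suc (j - 1) = j\<close> j(2) by simp
  have avoid: "c {u, v i} \<noteq> \<alpha> \<and> (i \<noteq> j \<longrightarrow> c {u, v i} \<noteq> \<beta>)" if "i \<in> {1..m}" for i
    using \<alpha> fan_edge_in_diff[OF fan] fan_colours_distinct[OF c fan that j(1)] that j(2)
    unfolding colour_missing_def by auto
  have "v (j - 1) \<noteq> u" "v m \<noteq> u" "v (j - 1) \<noteq> v m"
    using fan_vertex_ne_centre[OF fan] fan_vertex_eq_iff[OF fan, of "j - 1" m] \<open>j - 1 < m\<close> by simp_all
  then have "distinct [u, v (j - 1), v m]" by auto
  then have "v (j - 1) \<notin> ?chain u \<or> v m \<notin> ?chain u"
    using kempe_chain_ends[of ?G] fin two c \<alpha> \<beta> prev by auto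
  then show ?thesis
  proof (cases "v (j - 1) \<in> ?chain u")
    case False
    then show ?thesis
      using fan_kempe_swap_colourable[OF two c fan_prefix[OF fan, of "j - 1"] assms(5,6) \<alpha> prev]
        avoid j(1) kempe_chain_sym by fastforce
  next
    case True
    moreover assume "v (j - 1) \<notin> ?chain u \<or> v m \<notin> ?chain u"
    ultimately have "u \<notin> ?chain (v m)" "v (j - 1) \<notin> ?chain (v m)"
      using kempe_chain_sym kempe_chain_trans by metis+
    then show ?thesis using fan_kempe_swap_colourable[OF two c fan assms(5,6) \<alpha> \<beta>] avoid by fastforce
  qed
qed

lemma colourable_insert_edge:
  assumes fin: "finite F" and two: "\<forall>f\<in>F. card f = 2" and e: "{u, v\<^sub>0} \<in> F"
    and deg: "\<forall>x. card (edges_at F x) < k" and col: "colourable (F - {{u, v\<^sub>0}}) k"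
  shows "colourable F k"
proof -
  obtain c where c: "proper_edge_colouring (F - {{u, v\<^sub>0}}) k c"
    using col unfolding colourable_def by blast
  obtain v m where v0: "v 0 = v\<^sub>0" and fan: "fan F u c v m"
    and maximal: "\<And>w. {u, w} \<in> F - {{u, v\<^sub>0}} \<Longrightarrow>
      colour_missing (F - {{u, v\<^sub>0}}) c (v m) (c {u, w}) \<Longrightarrow> w \<in> v ` {0..m}"
    using maximal_fan_exists[OF fin two e] by blast
  let ?G = "F - {{u, v\<^sub>0}}"
  have "\<exists>\<gamma><k. colour_missing ?G c x \<gamma>" for x
  proof -
    have "card (edges_at ?G x) \<le> card (edges_at F x)" using fin by (intro card_mono) auto
    then have "card (edges_at ?G x) < k" using deg by (meson le_less_trans)
    moreover have "finite ?G" using fin by simp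
    ultimately obtain \<gamma> where "\<gamma> < k" "colour_missing ?G c x \<gamma>"
      using colour_missing_if_degree_less by metis
    then show ?thesis by blast
  qed
  then obtain \<alpha> \<beta> where \<alpha>: "\<alpha> < k" "colour_missing ?G c u \<alpha>"
    and \<beta>: "\<beta> < k" "colour_missing ?G c (v m) \<beta>" by metis
  show ?thesis
  proof (cases "colour_missing ?G c u \<beta>")
    case True
    then show ?thesis using fan_shift_colourable[OF c[folded v0] fan \<beta>(1)] \<beta>(2) v0 by simp
  next
    case False
    then obtain f where f: "f \<in> ?G" "u \<in> f" "c f = \<beta>" unfolding colour_missing_def by blast
    then obtain w where w: "f = {u, w}" using card_2_obtain_other two by (metis DiffD1)
    then have "w \<in> v ` {0..m}" using maximal[of w] f(1,3) \<beta>(2) by simp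
    then obtain j where "j \<le> m" "v j = w" by auto
    moreover have "j \<noteq> 0" using f(1) w v0 \<open>v j = w\<close> by auto
    ultimately have "j \<in> {1..m}" "c {u, v j} = \<beta>" using f(3) w by auto
    then show ?thesis
      using fan_kempe_colourable[OF fin two c[folded v0] fan \<alpha>(1) \<beta>(1)] \<alpha>(2) \<beta>(2) v0 by simp
  qed
qed

section \<open>Edge-critical graphs\<close>

definition edge_critical :: "nat \<Rightarrow> 'a set set \<Rightarrow> bool" where
  "edge_critical k F \<longleftrightarrow> \<not> colourable F k \<and> (\<forall>F'. F' \<subset> F \<longrightarrow> colourable F' k)"

lemma ex_edge_critical_subset:
  assumes "finite F" "\<not> colourable F k"
  shows "\<exists>F'\<subseteq>F. edge_critical k F'"
  using assms
proof (induction F rule: finite_psubset_induct)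
  case (psubset F)
  show ?case
  proof (cases "\<exists>F'\<subset>F. \<not> colourable F' k")
    case True
    then obtain F' where "F' \<subset> F" "\<not> colourable F' k" by blast
    then show ?thesis using psubset.IH by (meson psubset_imp_subset subset_trans)
  next
    case False
    then show ?thesis using psubset.prems unfolding edge_critical_def by blast
  qed
qed

lemma edge_critical_nonempty: "edge_critical k F \<Longrightarrow> F \<noteq> {}"
  unfolding edge_critical_def colourable_def proper_edge_colouring_def by auto

lemma colourable_singleton: "1 \<le> k \<Longrightarrow> colourable {f} k"
  unfolding colourable_def proper_edge_colouring_def by (intro exI[of _ "\<lambda>_. 0"]) auto

lemma edge_critical_no_cut_vertex:
  assumes "finite F" "edge_critical k F" "card (edges_at F u) \<le> k"
    and "F\<^sub>1 \<union> F\<^sub>2 = F" "F\<^sub>1 \<inter> F\<^sub>2 = {}" "F\<^sub>1 \<noteq> {}" "F\<^sub>2 \<noteq> {}" "\<Union>F\<^sub>1 \<inter> \<Union>F\<^sub>2 \<subseteq> {u}"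
  shows False
proof -
  have "F\<^sub>1 \<subset> F" "F\<^sub>2 \<subset> F" using assms(4-7) by auto
  then have "colourable F\<^sub>1 k" "colourable F\<^sub>2 k" using assms(2) unfolding edge_critical_def by auto
  then have "colourable F k"
    using colourable_Un_at_cut_vertex[of F\<^sub>1 F\<^sub>2 k u] assms(1,3-5,8) by auto
  then show False using assms(2) unfolding edge_critical_def by blast
qed

lemma cut_at_closed_vertex_set:
  assumes "\<forall>f\<in>F. card f = 2" "u \<notin> C"
    and closed: "\<And>a b. a \<in> C \<Longrightarrow> {a, b} \<in> F \<Longrightarrow> u \<notin> {a, b} \<Longrightarrow> b \<in> C"
  shows "\<Union>{f\<in>F. f \<inter> C \<noteq> {}} \<inter> \<Union>{f\<in>F. f \<inter> C = {}} \<subseteq> {u}"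
proof
  fix z assume "z \<in> \<Union>{f\<in>F. f \<inter> C \<noteq> {}} \<inter> \<Union>{f\<in>F. f \<inter> C = {}}"
  then obtain f a where f: "f \<in> F" "z \<in> f" "a \<in> f" "a \<in> C" and "z \<notin> C" by blast
  then have "f = {a, z}" using assms(1) card_2_doubleton by (metis insert_commute)
  then show "z \<in> {u}" using closed f \<open>z \<notin> C\<close> assms(2) by blast
qed

lemma rtranclp_edge_rel_in_Union:
  assumes "(\<lambda>x y. {x, y} \<in> T)\<^sup>*\<^sup>* x z"
  shows "z = x \<or> z \<in> \<Union>T"
  using assms by (cases rule: rtranclp.cases) auto

text \<open>Otherwise the edges meeting one component of \<open>F - u\<close> and the remaining edges would
  form two parts that share only \<open>u\<close>.\<close>
lemma edge_critical_delete_vertex_connected: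
  assumes fin: "finite F" and two: "\<forall>f\<in>F. card f = 2" and crit: "edge_critical k F"
    and deg: "card (edges_at F u) \<le> k"
  shows "connected_edge_set {f\<in>F. u \<notin> f}"
  unfolding connected_edge_set_def
proof (intro ballI, rule ccontr)
  define T where "T = {f\<in>F. u \<notin> f}"
  fix x y assume xy: "x \<in> \<Union>{f\<in>F. u \<notin> f}" "y \<in> \<Union>{f\<in>F. u \<notin> f}"
    and not_conn: "\<not> (\<lambda>x y. {x, y} \<in> {f\<in>F. u \<notin> f})\<^sup>*\<^sup>* x y"
  define C where "C = {z. (\<lambda>x y. {x, y} \<in> T)\<^sup>*\<^sup>* x z}"
  define F\<^sub>1 where "F\<^sub>1 = {f\<in>F. f \<inter> C \<noteq> {}}"
  define F\<^sub>2 where "F\<^sub>2 = {f\<in>F. f \<inter> C = {}}"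
  have closed: "b \<in> C" if "a \<in> C" "{a, b} \<in> F" "u \<notin> {a, b}" for a b
    using that unfolding C_def T_def by (auto intro: rtranclp.rtrancl_into_rtrancl)
  have "u \<notin> C" using rtranclp_edge_rel_in_Union[of T x u] xy(1) unfolding C_def T_def by blast
  have "y \<notin> C" using not_conn unfolding C_def T_def by simp
  obtain g\<^sub>x g\<^sub>y where g: "g\<^sub>x \<in> T" "x \<in> g\<^sub>x" "g\<^sub>y \<in> T" "y \<in> g\<^sub>y" using xy unfolding T_def by blast
  have "g\<^sub>x \<in> F\<^sub>1" using g unfolding F\<^sub>1_def C_def T_def by blast
  have "a \<notin> C" if "a \<in> g\<^sub>y" for a
  proof
    assume "a \<in> C"
    then have "a \<noteq> y" using \<open>y \<notin> C\<close> by blast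
    have "card g\<^sub>y = 2" using two g(3) unfolding T_def by blast
    then have "g\<^sub>y = {a, y}" using that g(4) \<open>a \<noteq> y\<close> by (rule card_2_doubleton)
    then show False using closed[OF \<open>a \<in> C\<close>] g(3) \<open>y \<notin> C\<close> unfolding T_def by auto
  qed
  then have "g\<^sub>y \<in> F\<^sub>2" using g(3) unfolding F\<^sub>2_def T_def by blast
  have "F\<^sub>1 \<union> F\<^sub>2 = F" "F\<^sub>1 \<inter> F\<^sub>2 = {}" unfolding F\<^sub>1_def F\<^sub>2_def by blast+
  moreover have "F\<^sub>1 \<noteq> {}" "F\<^sub>2 \<noteq> {}" using \<open>g\<^sub>x \<in> F\<^sub>1\<close> \<open>g\<^sub>y \<in> F\<^sub>2\<close> by blast+
  moreover have "\<Union>F\<^sub>1 \<inter> \<Union>F\<^sub>2 \<subseteq> {u}"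
    unfolding F\<^sub>1_def F\<^sub>2_def by (rule cut_at_closed_vertex_set[OF two \<open>u \<notin> C\<close> closed])
  ultimately show False by (rule edge_critical_no_cut_vertex[OF fin crit deg])
qed

lemma edge_critical_no_leaf:
  assumes fin: "finite F" and two: "\<forall>f\<in>F. card f = 2" and crit: "edge_critical k F"
    and deg: "card (edges_at F u) \<le> k" and "1 \<le> k" and "{u, w} \<in> F" "w \<noteq> u"
  shows "w \<in> \<Union>{f\<in>F. u \<notin> f}"
proof (rule ccontr)
  assume no_other: "w \<notin> \<Union>{f\<in>F. u \<notin> f}"
  have "F \<noteq> {{u, w}}" using colourable_singleton[OF \<open>1 \<le> k\<close>] crit unfolding edge_critical_def by auto
  moreover have "\<Union>{{u, w}} \<inter> \<Union>(F - {{u, w}}) \<subseteq> {u}"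
  proof
    fix z assume "z \<in> \<Union>{{u, w}} \<inter> \<Union>(F - {{u, w}})"
    then obtain g where g: "g \<in> F" "g \<noteq> {u, w}" "z \<in> g" "z = u \<or> z = w" by blast
    have "u \<in> g" if "z = w"
      using no_other g that by blast
    then have "z = w \<Longrightarrow> g = {u, w}" using card_2_doubleton two g(1,3) \<open>w \<noteq> u\<close> by metis
    then show "z \<in> {u}" using g by blast
  qed
  ultimately show False
    using edge_critical_no_cut_vertex[OF fin crit deg, of "{{u, w}}" "F - {{u, w}}"] \<open>{u, w} \<in> F\<close>
    by blast
qed

lemma edge_critical_ex_degree_eq:
  assumes fin: "finite F" and two: "\<forall>f\<in>F. card f = 2" and crit: "edge_critical k F"
    and deg: "\<forall>x. card (edges_at F x) \<le> k"
  obtains u where "card (edges_at F u) = k"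
proof -
  obtain a b where e: "{a, b} \<in> F" using two edge_critical_nonempty[OF crit] by (metis all_not_in_conv card_2_iff)
  have "colourable (F - {{a, b}}) k" using crit e unfolding edge_critical_def by blast
  then have "\<not> (\<forall>x. card (edges_at F x) < k)"
    using colourable_insert_edge[OF fin two e] crit unfolding edge_critical_def by blast
  then show thesis using that deg le_neq_implies_less by blast
qed

section \<open>Edge-disjoint brambles\<close>

definition edge_disjoint_bramble :: "'a set set \<Rightarrow> nat \<Rightarrow> (nat \<Rightarrow> 'a set set) \<Rightarrow> bool" where
  "edge_disjoint_bramble F n S \<longleftrightarrow>
     (\<forall>i<n. S i \<subseteq> F \<and> S i \<noteq> {} \<and> connected_edge_set (S i)) \<and>
     (\<forall>i<n. \<forall>j<n. i \<noteq> j \<longrightarrow> S i \<inter> S j = {} \<and> \<Union>(S i) \<inter> \<Union>(S j) \<noteq> {})"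

lemma edge_disjoint_bramble_mono:
  "F' \<subseteq> F \<Longrightarrow> edge_disjoint_bramble F' n S \<Longrightarrow> edge_disjoint_bramble F n S"
  unfolding edge_disjoint_bramble_def by (meson order_trans)

lemma connected_edge_set_singleton:
  assumes "card f = 2"
  shows "connected_edge_set {f}"
  unfolding connected_edge_set_def
proof (intro ballI)
  fix p q assume "p \<in> \<Union>{f}" "q \<in> \<Union>{f}"
  then show "(\<lambda>x y. {x, y} \<in> {f})\<^sup>*\<^sup>* p q"
    using card_2_doubleton[OF assms] by (cases "p = q") (auto intro: r_into_rtranclp)
qed

lemma edge_disjoint_bramble_star:
  assumes "\<forall>f\<in>F. card f = 2" "bij_betw h {..<n} D" "D \<subseteq> edges_at F u"
  shows "edge_disjoint_bramble F n (\<lambda>i. {h i})"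
proof -
  have "h i \<in> edges_at F u" if "i < n" for i using assms(2,3) that bij_betwE by blast
  moreover have "h i \<noteq> h j" if "i < n" "j < n" "i \<noteq> j" for i j
    using assms(2) that unfolding bij_betw_def inj_on_def by blast
  ultimately show ?thesis
    using assms(1) connected_edge_set_singleton unfolding edge_disjoint_bramble_def by blast
qed

lemma edge_disjoint_bramble_extend:
  assumes "edge_disjoint_bramble F n S" "T \<subseteq> F" "T \<noteq> {}" "connected_edge_set T"
    and "\<forall>i<n. S i \<inter> T = {} \<and> \<Union>(S i) \<inter> \<Union>T \<noteq> {}"
  shows "edge_disjoint_bramble F (Suc n) (S(n := T))"
  using assms unfolding edge_disjoint_bramble_def by (auto simp: less_Suc_eq Int_commute)

text \<open>The bramble: the \<open>k\<close> edges at a vertex \<open>u\<close> of degree \<open>k\<close>, and \<open>F - u\<close>.\<close>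
lemma edge_critical_bramble:
  assumes fin: "finite F" and two: "\<forall>f\<in>F. card f = 2" and crit: "edge_critical k F"
    and deg: "\<forall>x. card (edges_at F x) \<le> k"
  shows "\<exists>S. edge_disjoint_bramble F (Suc k) S"
proof -
  obtain u where u: "card (edges_at F u) = k"
    using edge_critical_ex_degree_eq[OF fin two crit deg] by blast
  obtain h where h: "bij_betw h {..<k} (edges_at F u)"
    using ex_bij_betw_nat_finite[of "edges_at F u"] fin u by (auto simp: atLeast0LessThan)
  let ?T = "{f\<in>F. u \<notin> f}"
  have touch: "\<Union>{h i} \<inter> \<Union>?T \<noteq> {}" if "i < k" for i
  proof -
    have "h i \<in> F" "u \<in> h i" using h that bij_betwE by blast+
    then obtain w where "w \<noteq> u" "h i = {u, w}" using card_2_obtain_other two by metis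
    moreover have "1 \<le> k" using that by simp
    ultimately have "w \<in> \<Union>?T"
      using edge_critical_no_leaf[OF fin two crit] u \<open>h i \<in> F\<close> by simp
    then show ?thesis using \<open>h i = {u, w}\<close> by blast
  qed
  have "k \<noteq> 0"
  proof -
    obtain e where "e \<in> F" using edge_critical_nonempty[OF crit] by blast
    moreover obtain a where "a \<in> e" using two \<open>e \<in> F\<close> by fastforce
    ultimately have "card (edges_at F a) \<noteq> 0" using fin by auto
    then show ?thesis using deg by (metis le_zero_eq)
  qed
  then have "?T \<noteq> {}" using touch[of 0] by blast
  moreover have "connected_edge_set ?T"
    using edge_critical_delete_vertex_connected[OF fin two crit] u by simp
  moreover have "\<forall>i<k. {h i} \<inter> ?T = {} \<and> \<Union>{h i} \<inter> \<Union>?T \<noteq> {}"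
    using h bij_betwE touch by blast
  ultimately have "edge_disjoint_bramble F (Suc k) ((\<lambda>i. {h i})(k := ?T))"
    by (intro edge_disjoint_bramble_extend[OF edge_disjoint_bramble_star[OF two h order_refl]]) auto
  then show ?thesis by blast
qed

lemma ex_edge_disjoint_bramble_star:
  assumes "finite F" "\<forall>f\<in>F. card f = 2" "n \<le> card (edges_at F x)"
  shows "\<exists>S. edge_disjoint_bramble F n S"
proof -
  obtain D where D: "D \<subseteq> edges_at F x" "card D = n" "finite D"
    using obtain_subset_with_card_n[OF assms(3)] by blast
  then obtain h where "bij_betw h {..<n} D"
    using ex_bij_betw_nat_finite[of D] by (auto simp: atLeast0LessThan)
  then show ?thesis using edge_disjoint_bramble_star[OF assms(2) _ D(1)] by blast
qed

lemma ex_edge_disjoint_bramble: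
  assumes "finite F" "\<forall>f\<in>F. card f = 2" "\<not> colourable F k"
  shows "\<exists>S. edge_disjoint_bramble F (Suc k) S"
proof -
  obtain F' where F': "F' \<subseteq> F" "edge_critical k F'"
    using ex_edge_critical_subset[OF assms(1,3)] by blast
  have fin: "finite F'" and two: "\<forall>f\<in>F'. card f = 2"
    using F'(1) assms(1,2) finite_subset by blast+
  have "\<exists>S. edge_disjoint_bramble F' (Suc k) S"
  proof (cases "\<exists>x. Suc k \<le> card (edges_at F' x)")
    case True
    then show ?thesis using ex_edge_disjoint_bramble_star[OF fin two] by blast
  next
    case False
    then show ?thesis using edge_critical_bramble[OF fin two F'(2)] by (simp add: not_less_eq_eq)
  qed
  then show ?thesis using edge_disjoint_bramble_mono[OF F'(1)] by blast
qed

theorem lemma2p4: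
  fixes V :: "'a set" and E :: "'a set set" and t :: nat
  assumes "simple_graph V E"
    and "chromatic_index E \<ge> t"
  shows "\<exists>S :: nat \<Rightarrow> 'a set set.
           (\<forall>i<t. S i \<subseteq> E \<and> S i \<noteq> {} \<and> connected_edge_set (S i)) \<and>
           (\<forall>i<t. \<forall>j<t. i \<noteq> j \<longrightarrow> S i \<inter> S j = {} \<and> \<Union>(S i) \<inter> \<Union>(S j) \<noteq> {})"
proof (cases t)
  case 0
  then show ?thesis by simp
next
  case (Suc k)
  have "finite V" "\<forall>e\<in>E. e \<subseteq> V \<and> card e = 2"
    using assms(1) unfolding simple_graph_def by auto
  then have fin: "finite E" and two: "\<forall>e\<in>E. card e = 2"
    by (auto intro: finite_subset[of E "Pow V"])
  have "\<not> colourable E k"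
  proof
    assume "colourable E k"
    then have "chromatic_index E \<le> k"
      unfolding colourable_def chromatic_index_def by (rule Least_le)
    then show False using assms(2) Suc by simp
  qed
  then show ?thesis
    using ex_edge_disjoint_bramble[OF fin two] Suc unfolding edge_disjoint_bramble_def by blast
qed

end
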